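(* Let $T$ be a lifted graph, $F\colon T\to T$ a continuous sun-like map of degree 1 with branches $(X^i)_{i\in\Lambda}$, ${\cal P}=\{X^i_j\}$ a basic partition of $F$ and ${\cal G}$ its covering graph. Let $\alpha,\beta$ be vertices of ${\cal G}$ with an arrow $\alpha\to\beta$. Then there exist $A_0,\dots,A_n,A_{n+1}\in{\cal P}$ and $k\in\{1,\dots,N_{\ell(A_n)}\}$ such that $\alpha=A_0\dots A_n/\!\sim$, $\beta=A_0\dots A_nA_{n+1}/\!\sim$ and $A_{n+1}=X^{\ell(A_n)}_k$. Moreover, for all $j\in\{1,\dots,k-1\}$, $\langle\alpha\rangle$ positively $F$-covers $X^{\ell(A_n)}_j+p(A_n)$, and $\alpha\to X^{\ell(A_n)}_j$ is an arrow in ${\cal G}$.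
   Context: A lifted graph is a connected topological space $T$ with a homeomorphism $h\colon\mathbb R\to h(\mathbb R)\subset T$ and a homeomorphism $\tau\colon T\to T$ such that $\tau(h(x))=h(x+1)$, the closure of each connected component of $T\setminus h(\mathbb R)$ is a topological finite graph meeting $h(\mathbb R)$ in exactly one point, and only finitely many such components have closure meeting $h([0,1])$. Identify $h(\mathbb R)$ with $\mathbb R$, write $x+m:=\tau^m(x)$; $r_{\mathbb R}\colon T\to\mathbb R$ is the identity on $\mathbb R$ and maps a component $C$ of $T\setminus\mathbb R$ to the point $\overline C\cap\mathbb R$. $F$ has degree 1 if $F(x+1)=F(x)+1$. Let $T_{\mathbb R}:=\overline{\bigcup_{n\ge0}F^n(\mathbb R)}$, $X:=\overline{T\setminus T_{\mathbb R}}\cap r_{\mathbb R}^{-1}([0,1))$. $F$ is sun-like if $(T\setminus T_{\mathbb R})\cap r_{\mathbb R}^{-1}([0,1))$ consists of finitely many intervals with pairwise disjoint closures $X^i$, $i\in\Lambda$ (branches), each a compact interval meeting $T_{\mathbb R}$ in one endpoint $\min X^i$ (fixing the order of $X^i$). For $j\in\Lambda$, $r_j\colon T\to X^j$ is $r_j(x)=x$ for $x\in X^j$ and $r_j(x)=\min X^j$ otherwise. Positive covering: for nonempty compact intervals $I\subset X^i$, $J\subset X^j$, $n\ge1$, $p\in\mathbb Z$, $I$ positively $F^n$-covers $J+p$ if there exist $x\le y$ in $I$ with $r_j(F^n(x)-p)\le\min J$ and $\max J\le r_j(F^n(y)-p)$ (order of $X^j$). A basic partition is a finite family ${\cal P}=\{X^i_j: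 i\in\Lambda, 1\le j\le N_i\}$ of pairwise disjoint nonempty compact intervals $X^i_1<\dots<X^i_{N_i}$ in $X^i$, with $\ell(X^i_j)\in\Lambda$, $p(X^i_j)\in\mathbb Z$, such that $F(X^i_j)\subset(X^{\ell(X^i_j)}+p(X^i_j))\cup\mathrm{Int}(T_{\mathbb R})$, $F(\min X^i_j)=\min X^{\ell(X^i_j)}+p(X^i_j)$, and $F(X\setminus\bigcup X^i_j)\cap(X+\mathbb Z)=\emptyset$. For $A_0,\dots,A_n\in{\cal P}$, $\langle A_0\dots A_n\rangle:=F^n(\{x\in T: F^i(x)\in A_i+\mathbb Z,\ 0\le i\le n\})\cap X$. $A_0\dots A_n\sim B_0\dots B_m$ iff for some $k\le\min(n,m)$, $A_{n-i}=B_{m-i}$ ($0\le i\le k$) and $\langle A_0\dots A_{n-k}\rangle=A_{n-k}=B_{m-k}=\langle B_0\dots B_{m-k}\rangle$. The covering graph ${\cal G}$: vertices are classes $A_0\dots A_n/\!\sim$ with $\langle A_0\dots A_n\rangle\ne\emptyset$; arrow $\alpha\to\beta$ iff $\alpha=A_0\dots A_n/\!\sim$, $\beta=A_0\dots A_nA_{n+1}/\!\sim$ for some $A_i\in{\cal P}$. For $B\in{\cal P}$, the vertex $B/\!\sim$ is denoted $B$. *)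

theory Defs
  imports "HOL-Analysis.Analysis"
begin

definition fin_graph :: "'a topology \<Rightarrow> bool" where
  "fin_graph Y \<longleftrightarrow> Hausdorff_space Y \<and>
     (\<exists>V E. finite V \<and> finite E \<and> topspace Y = V \<union> \<Union>E \<and>
        (\<forall>e\<in>E. closedin Y e \<and>
           (\<exists>g. embedding_map (subtopology euclideanreal {0..1}) Y g \<and> g ` {0..1} = e \<and>
                g 0 \<in> V \<and> g 1 \<in> V \<and> (\<forall>t\<in>{0<..<1}. g t \<notin> V))) \<and>
        (\<forall>e\<in>E. \<forall>e'\<in>E. e \<noteq> e' \<longrightarrow> e \<inter> e' \<subseteq> V))"

text \<open>The space T is topspace XT; h embeds the real line; tau is the translation.\<close>
definition lifted_graph :: "'a topology \<Rightarrow> (real \<Rightarrow> 'a) \<Rightarrow> ('a \<Rightarrow> 'a) \<Rightarrow> bool" where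
  "lifted_graph XT h \<tau> \<longleftrightarrow>
     connected_space XT \<and>
     embedding_map euclideanreal XT h \<and>
     homeomorphic_map XT XT \<tau> \<and>
     (\<forall>x. \<tau> (h x) = h (x + 1)) \<and>
     (\<forall>C \<in> connected_components_of (subtopology XT (topspace XT - range h)).
         fin_graph (subtopology XT (XT closure_of C)) \<and>
         (\<exists>!q. q \<in> (XT closure_of C) \<inter> range h)) \<and>
     finite {C \<in> connected_components_of (subtopology XT (topspace XT - range h)).
               (XT closure_of C) \<inter> h ` {0..1} \<noteq> {}}"

text \<open>x + m := tau^m(x), for m an integer.\<close>
definition tshift :: "'a topology \<Rightarrow> ('a \<Rightarrow> 'a) \<Rightarrow> int \<Rightarrow> 'a \<Rightarrow> 'a" where
  "tshift XT \<tau> m x = (if 0 \<le> m then (\<tau> ^^ nat m) x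
                      else (inv_into (topspace XT) \<tau> ^^ nat (- m)) x)"

definition rR :: "'a topology \<Rightarrow> (real \<Rightarrow> 'a) \<Rightarrow> 'a \<Rightarrow> 'a" where
  "rR XT h x = (if x \<in> range h then x
     else (THE q. q \<in> range h \<inter>
        XT closure_of (Collect (connected_component_of (subtopology XT (topspace XT - range h)) x))))"

definition degree_one :: "'a topology \<Rightarrow> ('a \<Rightarrow> 'a) \<Rightarrow> ('a \<Rightarrow> 'a) \<Rightarrow> bool" where
  "degree_one XT \<tau> F \<longleftrightarrow> (\<forall>x\<in>topspace XT. F (tshift XT \<tau> 1 x) = tshift XT \<tau> 1 (F x))"

definition TR :: "'a topology \<Rightarrow> (real \<Rightarrow> 'a) \<Rightarrow> ('a \<Rightarrow> 'a) \<Rightarrow> 'a set" where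
  "TR XT h F = XT closure_of (\<Union>n. (F ^^ n) ` range h)"

definition Xset :: "'a topology \<Rightarrow> (real \<Rightarrow> 'a) \<Rightarrow> ('a \<Rightarrow> 'a) \<Rightarrow> 'a set" where
  "Xset XT h F = XT closure_of (topspace XT - TR XT h F) \<inter>
                 {x \<in> topspace XT. rR XT h x \<in> h ` {0..<1}}"

text \<open>Sun-like map with branches X^i (i \<in> \<Lambda>).  Each branch X^i is given as
  gam i ` {0..1} where gam i is an arc with gam i 0 = min X^i; the order of X^i
  is the one transported by gam i.\<close>
definition sun_like ::
  "'a topology \<Rightarrow> (real \<Rightarrow> 'a) \<Rightarrow> ('a \<Rightarrow> 'a) \<Rightarrow> 'i set \<Rightarrow> ('i \<Rightarrow> real \<Rightarrow> 'a) \<Rightarrow> bool" where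
  "sun_like XT h F \<Lambda> gam \<longleftrightarrow>
     finite \<Lambda> \<and>
     (\<forall>i\<in>\<Lambda>. embedding_map (subtopology euclideanreal {0..1}) XT (gam i)) \<and>
     (\<forall>i\<in>\<Lambda>. \<forall>j\<in>\<Lambda>. i \<noteq> j \<longrightarrow> gam i ` {0..1} \<inter> gam j ` {0..1} = {}) \<and>
     (\<forall>i\<in>\<Lambda>. gam i ` {0..1} \<inter> TR XT h F = {gam i 0}) \<and>
     (topspace XT - TR XT h F) \<inter> {x \<in> topspace XT. rR XT h x \<in> h ` {0..<1}}
        = (\<Union>i\<in>\<Lambda>. gam i ` {0..1} - {gam i 0})"

definition rbr :: "('i \<Rightarrow> real \<Rightarrow> 'a) \<Rightarrow> 'i \<Rightarrow> 'a \<Rightarrow> 'a" where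
  "rbr gam j x = (if x \<in> gam j ` {0..1} then x else gam j 0)"

definition cinterval :: "('i \<Rightarrow> real \<Rightarrow> 'a) \<Rightarrow> 'i \<Rightarrow> 'a set \<Rightarrow> bool" where
  "cinterval gam i I \<longleftrightarrow> (\<exists>a b. 0 \<le> a \<and> a \<le> b \<and> b \<le> 1 \<and> I = gam i ` {a..b})"

definition pos_covers ::
  "'a topology \<Rightarrow> ('a \<Rightarrow> 'a) \<Rightarrow> ('a \<Rightarrow> 'a) \<Rightarrow> ('i \<Rightarrow> real \<Rightarrow> 'a) \<Rightarrow>
   'i \<Rightarrow> 'a set \<Rightarrow> 'i \<Rightarrow> 'a set \<Rightarrow> nat \<Rightarrow> int \<Rightarrow> bool" where
  "pos_covers XT \<tau> F gam i I j J n p \<longleftrightarrow>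
     1 \<le> n \<and>
     (\<exists>c d a b. 0 \<le> c \<and> c \<le> d \<and> d \<le> 1 \<and> I = gam i ` {c..d} \<and>
                0 \<le> a \<and> a \<le> b \<and> b \<le> 1 \<and> J = gam j ` {a..b} \<and>
        (\<exists>s t. c \<le> s \<and> s \<le> t \<and> t \<le> d \<and>
           (\<exists>u\<in>{0..1}. rbr gam j (tshift XT \<tau> (- p) ((F ^^ n) (gam i s))) = gam j u \<and> u \<le> a) \<and>
           (\<exists>v\<in>{0..1}. rbr gam j (tshift XT \<tau> (- p) ((F ^^ n) (gam i t))) = gam j v \<and> b \<le> v)))"

text \<open>The element X^i_j of the partition is Xp i j (i \<in> \<Lambda>, 1 \<le> j \<le> N i);
  elements of the partition are represented by their index pairs (i, j).
  lab i j = \<ell>(X^i_j), sh i j = p(X^i_j).\<close>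
definition pidx :: "'i set \<Rightarrow> ('i \<Rightarrow> nat) \<Rightarrow> ('i \<times> nat) set" where
  "pidx \<Lambda> N = {(i, j). i \<in> \<Lambda> \<and> 1 \<le> j \<and> j \<le> N i}"

definition basic_partition ::
  "'a topology \<Rightarrow> (real \<Rightarrow> 'a) \<Rightarrow> ('a \<Rightarrow> 'a) \<Rightarrow> ('a \<Rightarrow> 'a) \<Rightarrow> 'i set \<Rightarrow> ('i \<Rightarrow> real \<Rightarrow> 'a) \<Rightarrow>
   ('i \<Rightarrow> nat) \<Rightarrow> ('i \<Rightarrow> nat \<Rightarrow> 'a set) \<Rightarrow> ('i \<Rightarrow> nat \<Rightarrow> 'i) \<Rightarrow> ('i \<Rightarrow> nat \<Rightarrow> int) \<Rightarrow> bool" where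
  "basic_partition XT h \<tau> F \<Lambda> gam N Xp lab sh \<longleftrightarrow>
     (\<forall>(i, j) \<in> pidx \<Lambda> N. cinterval gam i (Xp i j)) \<and>
     (\<forall>i\<in>\<Lambda>. \<forall>j j'. 1 \<le> j \<and> j < j' \<and> j' \<le> N i \<longrightarrow>
        (\<forall>s\<in>{0..1}. \<forall>t\<in>{0..1}. gam i s \<in> Xp i j \<and> gam i t \<in> Xp i j' \<longrightarrow> s < t)) \<and>
     (\<forall>(i, j) \<in> pidx \<Lambda> N. lab i j \<in> \<Lambda> \<and>
        F ` Xp i j \<subseteq> tshift XT \<tau> (sh i j) ` (gam (lab i j) ` {0..1}) \<union> XT interior_of TR XT h F \<and>
        (\<exists>a\<in>{0..1}. Xp i j \<subseteq> gam i ` {a..1} \<and> gam i a \<in> Xp i j \<and>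
                    F (gam i a) = tshift XT \<tau> (sh i j) (gam (lab i j) 0))) \<and>
     F ` (Xset XT h F - (\<Union>(i, j) \<in> pidx \<Lambda> N. Xp i j)) \<inter>
        {tshift XT \<tau> m x | m x. x \<in> Xset XT h F} = {}"

definition bra ::
  "'a topology \<Rightarrow> (real \<Rightarrow> 'a) \<Rightarrow> ('a \<Rightarrow> 'a) \<Rightarrow> ('a \<Rightarrow> 'a) \<Rightarrow>
   ('i \<Rightarrow> nat \<Rightarrow> 'a set) \<Rightarrow> ('i \<times> nat) list \<Rightarrow> 'a set" where
  "bra XT h \<tau> F Xp as =
     (F ^^ (length as - 1)) `
        {x \<in> topspace XT. \<forall>i < length as.
            (F ^^ i) x \<in> {tshift XT \<tau> m y | m y. y \<in> Xp (fst (as ! i)) (snd (as ! i))}}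
     \<inter> Xset XT h F"

definition simr ::
  "'a topology \<Rightarrow> (real \<Rightarrow> 'a) \<Rightarrow> ('a \<Rightarrow> 'a) \<Rightarrow> ('a \<Rightarrow> 'a) \<Rightarrow>
   ('i \<Rightarrow> nat \<Rightarrow> 'a set) \<Rightarrow> ('i \<times> nat) list \<Rightarrow> ('i \<times> nat) list \<Rightarrow> bool" where
  "simr XT h \<tau> F Xp as bs \<longleftrightarrow> as \<noteq> [] \<and> bs \<noteq> [] \<and>
     (let n = length as - 1; m = length bs - 1 in
      \<exists>k \<le> min n m.
        (\<forall>i \<le> k. as ! (n - i) = bs ! (m - i)) \<and>
        bra XT h \<tau> F Xp (take (n - k + 1) as) = Xp (fst (as ! (n - k))) (snd (as ! (n - k))) \<and>
        bra XT h \<tau> F Xp (take (m - k + 1) bs) = Xp (fst (bs ! (m - k))) (snd (bs ! (m - k))))"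

definition cls ::
  "'a topology \<Rightarrow> (real \<Rightarrow> 'a) \<Rightarrow> ('a \<Rightarrow> 'a) \<Rightarrow> ('a \<Rightarrow> 'a) \<Rightarrow> 'i set \<Rightarrow> ('i \<Rightarrow> nat) \<Rightarrow>
   ('i \<Rightarrow> nat \<Rightarrow> 'a set) \<Rightarrow> ('i \<times> nat) list \<Rightarrow> ('i \<times> nat) list set" where
  "cls XT h \<tau> F \<Lambda> N Xp as = {bs. set bs \<subseteq> pidx \<Lambda> N \<and> simr XT h \<tau> F Xp as bs}"

definition cg_vertices ::
  "'a topology \<Rightarrow> (real \<Rightarrow> 'a) \<Rightarrow> ('a \<Rightarrow> 'a) \<Rightarrow> ('a \<Rightarrow> 'a) \<Rightarrow> 'i set \<Rightarrow> ('i \<Rightarrow> nat) \<Rightarrow>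
   ('i \<Rightarrow> nat \<Rightarrow> 'a set) \<Rightarrow> ('i \<times> nat) list set set" where
  "cg_vertices XT h \<tau> F \<Lambda> N Xp =
     {cls XT h \<tau> F \<Lambda> N Xp as | as. as \<noteq> [] \<and> set as \<subseteq> pidx \<Lambda> N \<and> bra XT h \<tau> F Xp as \<noteq> {}}"

definition cg_arrow ::
  "'a topology \<Rightarrow> (real \<Rightarrow> 'a) \<Rightarrow> ('a \<Rightarrow> 'a) \<Rightarrow> ('a \<Rightarrow> 'a) \<Rightarrow> 'i set \<Rightarrow> ('i \<Rightarrow> nat) \<Rightarrow>
   ('i \<Rightarrow> nat \<Rightarrow> 'a set) \<Rightarrow> ('i \<times> nat) list set \<Rightarrow> ('i \<times> nat) list set \<Rightarrow> bool" where
  "cg_arrow XT h \<tau> F \<Lambda> N Xp \<alpha> \<beta> \<longleftrightarrow>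
     \<alpha> \<in> cg_vertices XT h \<tau> F \<Lambda> N Xp \<and> \<beta> \<in> cg_vertices XT h \<tau> F \<Lambda> N Xp \<and>
     (\<exists>as a. as \<noteq> [] \<and> set as \<subseteq> pidx \<Lambda> N \<and> a \<in> pidx \<Lambda> N \<and>
        \<alpha> = cls XT h \<tau> F \<Lambda> N Xp as \<and> \<beta> = cls XT h \<tau> F \<Lambda> N Xp (as @ [a]))"

end

(* Every nonempty set <A_0 ... A_n> is an initial segment [min A_n, d] of A_n.  Indeed, F maps
   such a segment, translated back by p(A_n), onto a continuum through min X^l, l = l(A_n), that
   lies in X^l and the interior of T_R; since the arc X^l leaves T_R at once, such a continuum
   meets X^l in an initial segment [min X^l, s], and intersecting it with the next element of the
   partition gives again an initial segment.  If the arrow is labelled by X^l_k, then s lies beyond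
   a point of X^l_k and hence beyond all of X^l_j, j < k.  So <alpha> positively F-covers
   X^l_j + p(A_n), and <A_0 ... A_n X^l_j> = X^l_j, which makes A_0 ... A_n X^l_j equivalent to
   the one-letter word X^l_j. *)

theory Submission
  imports Defs
begin

section \<open>Compact connected sets meeting an arc\<close>

lemma compact_of_compactin_arc_image:
  assumes emb: "embedding_map (subtopology euclideanreal {0..1}) X g"
    and K: "K \<subseteq> {0..1}" and "compactin X (g ` K)"
  shows "compact K"
proof -
  have hom: "homeomorphic_map (subtopology euclideanreal {0..1}) (subtopology X (g ` {0..1})) g"
    using emb by (simp add: embedding_map_def)
  have "compactin (subtopology X (g ` {0..1})) (g ` K)"
    using assms by (simp add: compactin_subtopology image_mono)
  then have "compactin (subtopology euclideanreal {0..1}) K"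
    using homeomorphic_map_compactness[OF hom] K by simp
  then show ?thesis by (simp add: compactin_subtopology)
qed

lemma openin_arc_image:
  assumes emb: "embedding_map (subtopology euclideanreal {0..1}) X g" and "open V"
  obtains U where "openin X U" "g ` ({0..1} \<inter> V) = U \<inter> g ` {0..1}"
proof -
  have hom: "homeomorphic_map (subtopology euclideanreal {0..1}) (subtopology X (g ` {0..1})) g"
    using emb by (simp add: embedding_map_def)
  have "openin (subtopology euclideanreal {0..1}) ({0..1} \<inter> V)"
    using \<open>open V\<close> by (auto simp: openin_open)
  then have "openin (subtopology X (g ` {0..1})) (g ` ({0..1} \<inter> V))"
    using homeomorphic_map_openness[OF hom] by auto
  then show ?thesis
    using that by (auto simp: openin_subtopology)
qed

text \<open>If \<open>g t\<close> is missed, then \<open>X interior_of T \<union> g ` [0,t)\<close> and \<open>g ` (t,1] - T\<close> separate \<open>C\<close>.\<close>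
lemma connectedin_arc_no_gap:
  assumes emb: "embedding_map (subtopology euclideanreal {0..1}) X g"
    and T: "closedin X T" and off_T: "\<And>u. 0 < u \<Longrightarrow> u \<le> 1 \<Longrightarrow> g u \<notin> T"
    and C: "connectedin X C" "C \<subseteq> g ` {0..1} \<union> X interior_of T"
    and ends: "g 0 \<in> C" "g s \<in> C" and t: "0 < t" "t < s" "s \<le> 1"
  shows "g t \<in> C"
proof (rule ccontr)
  assume gt: "g t \<notin> C"
  have inj: "inj_on g {0..1}"
    using emb unfolding embedding_map_def using homeomorphic_imp_injective_map by fastforce
  obtain U1 where U1: "openin X U1" "g ` ({0..1} \<inter> {..<t}) = U1 \<inter> g ` {0..1}"
    using openin_arc_image[OF emb, of "{..<t}"] by auto
  obtain U2 where U2: "openin X U2" "g ` ({0..1} \<inter> {t<..}) = U2 \<inter> g ` {0..1}"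
    using openin_arc_image[OF emb, of "{t<..}"] by auto
  define E1 where "E1 = X interior_of T \<union> U1"
  define E2 where "E2 = U2 - T"
  have "openin X E1" "openin X E2"
    unfolding E1_def E2_def using U1(1) U2(1) T by auto
  moreover have "C \<subseteq> E1 \<union> E2"
  proof
    fix c assume c: "c \<in> C"
    show "c \<in> E1 \<union> E2"
    proof (cases "c \<in> X interior_of T")
      case False
      then obtain u where u: "u \<in> {0..1}" "c = g u" using C(2) c by blast
      then have "u < t \<or> t < u" using gt c by (metis linorder_neqE_linordered_idom)
      then show ?thesis
        using u U1(2) U2(2) off_T[of u] t unfolding E1_def E2_def by auto
    qed (simp add: E1_def)
  qed
  moreover have "E1 \<inter> E2 \<inter> C = {}"
  proof -
    have "c \<notin> E1 \<inter> E2" if "c \<in> C" for c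
    proof
      assume "c \<in> E1 \<inter> E2"
      then have "c \<in> U1 \<inter> g ` {0..1}" "c \<in> U2 \<inter> g ` {0..1}"
        using that C(2) interior_of_subset[of X T] unfolding E1_def E2_def by auto
      then have "c \<in> g ` ({0..1} \<inter> {..<t}) \<inter> g ` ({0..1} \<inter> {t<..})"
        using U1(2) U2(2) by blast
      also have "\<dots> = g ` ({0..1} \<inter> {..<t} \<inter> ({0..1} \<inter> {t<..}))"
        by (rule inj_on_image_Int[OF inj, symmetric]) auto
      finally show False by auto
    qed
    then show ?thesis by blast
  qed
  moreover have "g 0 \<in> E1 \<inter> C" "g s \<in> E2 \<inter> C"
    using U1(2) U2(2) ends t off_T[of s] unfolding E1_def E2_def by auto
  ultimately show False
    using C(1) unfolding connectedin by blast
qed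

lemma compact_connected_Int_arc:
  assumes emb: "embedding_map (subtopology euclideanreal {0..1}) X g"
    and T: "closedin X T" and off_T: "\<And>u. 0 < u \<Longrightarrow> u \<le> 1 \<Longrightarrow> g u \<notin> T"
    and arc_T: "g ` {0..1} \<inter> X interior_of T = {}"
    and C: "compactin X C" "connectedin X C" "C \<subseteq> g ` {0..1} \<union> X interior_of T"
    and g0: "g 0 \<in> C"
  shows "\<exists>s\<in>{0..1}. C \<inter> g ` {0..1} = g ` {0..s}"
proof -
  define K where "K = {u \<in> {0..1}. g u \<in> C}"
  have K01: "K \<subseteq> {0..1}" and K0: "0 \<in> K"
    using g0 by (auto simp: K_def)
  have CK: "C \<inter> g ` {0..1} = g ` K"
    unfolding K_def by auto
  have "g ` K = C \<inter> (topspace X - X interior_of T)"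
    using C(3) arc_T compactin_subset_topspace[OF C(1)] unfolding CK[symmetric] by blast
  moreover have "closedin X (topspace X - X interior_of T)"
    by (simp add: closedin_diff)
  ultimately have "compactin X (g ` K)"
    using compact_Int_closedin[OF C(1)] by metis
  then have "compact K"
    by (rule compact_of_compactin_arc_image[OF emb K01])
  then obtain s where s: "s \<in> K" "\<And>u. u \<in> K \<Longrightarrow> u \<le> s"
    using compact_attains_sup K0 by (metis empty_iff)
  have "u \<in> K" if u: "0 < u" "u < s" for u
  proof -
    have s1: "s \<le> 1" and gs: "g s \<in> C"
      using s(1) by (simp_all add: K_def)
    have "g u \<in> C"
      by (rule connectedin_arc_no_gap[OF emb T off_T C(2,3) g0 gs u s1])
    then show ?thesis
      using u s1 by (simp add: K_def)
  qed
  then have "{0..s} \<subseteq> K"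
    using K0 s(1) by (metis atLeastAtMost_iff order_le_less subsetI)
  moreover have "K \<subseteq> {0..s}"
    using K01 s(2) by (meson atLeastAtMost_iff subset_iff)
  ultimately have "C \<inter> g ` {0..1} = g ` {0..s}"
    using CK by blast
  then show ?thesis
    using s(1) K01 by blast
qed

section \<open>Translations of a lifted graph\<close>

lemma funpow_in_topspace:
  assumes "\<And>x. x \<in> topspace X \<Longrightarrow> g x \<in> topspace X" and "x \<in> topspace X"
  shows "(g ^^ n) x \<in> topspace X"
  using assms(2) by (induction n) (auto intro: assms(1))

locale lifted_space =
  fixes XT :: "'a topology" and h :: "real \<Rightarrow> 'a" and \<tau> :: "'a \<Rightarrow> 'a"
  assumes lifted: "lifted_graph XT h \<tau>"
begin

abbreviation "tsh \<equiv> tshift XT \<tau>"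
abbreviation "\<sigma> \<equiv> inv_into (topspace XT) \<tau>"

lemma tau_homeomorphic: "homeomorphic_map XT XT \<tau>"
  using lifted by (simp add: lifted_graph_def)

lemma tau_image: "\<tau> ` topspace XT = topspace XT"
  using tau_homeomorphic homeomorphic_imp_surjective_map by blast

lemma tau_in_topspace: "x \<in> topspace XT \<Longrightarrow> \<tau> x \<in> topspace XT"
  using tau_image by blast

lemma sigma_tau: "x \<in> topspace XT \<Longrightarrow> \<sigma> (\<tau> x) = x"
  using tau_homeomorphic homeomorphic_imp_injective_map inv_into_f_f by metis

lemma tau_sigma: "x \<in> topspace XT \<Longrightarrow> \<tau> (\<sigma> x) = x"
  using tau_image by (metis f_inv_into_f)

lemma sigma_in_topspace: "x \<in> topspace XT \<Longrightarrow> \<sigma> x \<in> topspace XT"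
  using tau_image by (metis inv_into_into)

lemma sigma_continuous: "continuous_map XT XT \<sigma>"
proof -
  obtain g where g: "homeomorphic_maps XT XT \<tau> g"
    using tau_homeomorphic homeomorphic_map_maps by blast
  have "g y = \<sigma> y" if "y \<in> topspace XT" for y
  proof -
    have "\<tau> (g y) = y" "g y \<in> topspace XT"
      using g that unfolding homeomorphic_maps_def by (auto simp: continuous_map_def)
    then show ?thesis using sigma_tau by metis
  qed
  then show ?thesis
    using g continuous_map_eq unfolding homeomorphic_maps_def by metis
qed

lemma tshift_in_topspace: "x \<in> topspace XT \<Longrightarrow> tsh m x \<in> topspace XT"
  unfolding tshift_def
  using funpow_in_topspace[of XT \<tau>, OF tau_in_topspace]
    funpow_in_topspace[of XT \<sigma>, OF sigma_in_topspace]
  by auto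

lemma tshift_0 [simp]: "tsh 0 x = x"
  by (simp add: tshift_def)

lemma tshift_succ:
  assumes "x \<in> topspace XT"
  shows "tsh (m + 1) x = \<tau> (tsh m x)"
proof (cases "0 \<le> m")
  case True
  then have "nat (m + 1) = Suc (nat m)" by simp
  then show ?thesis using True by (simp add: tshift_def)
next
  case False
  then have "nat (- m) = Suc (nat (- (m + 1)))" by simp
  then have "tsh m x = \<sigma> ((\<sigma> ^^ nat (- (m + 1))) x)"
    using False by (simp add: tshift_def)
  moreover have "(\<sigma> ^^ nat (- (m + 1))) x \<in> topspace XT"
    using funpow_in_topspace[of XT \<sigma>] sigma_in_topspace assms by blast
  moreover have "tsh (m + 1) x = (\<sigma> ^^ nat (- (m + 1))) x"
    using False by (auto simp: tshift_def)
  ultimately show ?thesis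
    using tau_sigma by simp
qed

lemma tshift_pred:
  assumes "x \<in> topspace XT"
  shows "tsh (m - 1) x = \<sigma> (tsh m x)"
  using tshift_succ[OF assms, of "m - 1"] sigma_tau tshift_in_topspace assms by (metis diff_add_cancel)

lemma tshift_add:
  assumes "x \<in> topspace XT"
  shows "tsh m (tsh m' x) = tsh (m + m') x"
proof (induction m rule: int_induct[where k = 0])
  case (step1 i)
  have "tsh (i + 1 + m') x = \<tau> (tsh (i + m') x)"
    using tshift_succ[OF assms, of "i + m'"] by (simp add: ac_simps)
  then show ?case
    using step1 tshift_succ[OF tshift_in_topspace[OF assms]] by simp
next
  case (step2 i)
  have "tsh (i - 1 + m') x = \<sigma> (tsh (i + m') x)"
    using tshift_pred[OF assms, of "i + m'"] by (simp add: algebra_simps)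
  then show ?case
    using step2 tshift_pred[OF tshift_in_topspace[OF assms]] by simp
qed simp

lemma tshift_cancel: "x \<in> topspace XT \<Longrightarrow> tsh (- m) (tsh m x) = x"
  by (simp add: tshift_add)

lemma tshift_cancel': "x \<in> topspace XT \<Longrightarrow> tsh m (tsh (- m) x) = x"
  by (simp add: tshift_add)

lemma tshift_continuous: "continuous_map XT XT (tsh m)"
proof (induction m rule: int_induct[where k = 0])
  case (step1 i)
  then have "continuous_map XT XT (\<tau> \<circ> tsh i)"
    using tau_homeomorphic continuous_map_compose homeomorphic_imp_continuous_map by blast
  then show ?case by (rule continuous_map_eq) (simp add: tshift_succ)
next
  case (step2 i)
  then have "continuous_map XT XT (\<sigma> \<circ> tsh i)"
    using sigma_continuous continuous_map_compose by blast
  then show ?case by (rule continuous_map_eq) (simp add: tshift_pred)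
qed (simp add: tshift_def)

lemma tshift_homeomorphic: "homeomorphic_map XT XT (tsh m)"
proof -
  have "homeomorphic_maps XT XT (tsh m) (tsh (- m))"
    unfolding homeomorphic_maps_def using tshift_continuous tshift_cancel tshift_cancel' by auto
  then show ?thesis using homeomorphic_map_maps by blast
qed

lemma h_embedding: "embedding_map euclideanreal XT h"
  using lifted by (simp add: lifted_graph_def)

lemma h_in_topspace: "h u \<in> topspace XT"
proof -
  have "continuous_map euclideanreal XT h"
    using h_embedding
    by (metis continuous_map_in_subtopology embedding_map_def homeomorphic_imp_continuous_map)
  then show ?thesis
    using continuous_map_image_subset_topspace by fastforce
qed

lemma inj_h: "inj h"
  using h_embedding unfolding embedding_map_def using homeomorphic_imp_injective_map by fastforce

lemma tau_h: "\<tau> (h u) = h (u + 1)"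
  using lifted by (simp add: lifted_graph_def)

lemma tshift_h: "tsh m (h u) = h (u + of_int m)"
proof (induction m arbitrary: u rule: int_induct[where k = 0])
  case (step1 i)
  have "tsh (i + 1) (h u) = \<tau> (tsh i (h u))"
    using tshift_succ[OF h_in_topspace] by blast
  then show ?case
    using step1 tau_h by (simp add: algebra_simps)
next
  case (step2 i)
  have "\<sigma> (h u) = h (u - 1)" for u
    using tau_h[of "u - 1"] sigma_tau[OF h_in_topspace, of "u - 1"] by simp
  then show ?case
    using step2 tshift_pred[OF h_in_topspace] by (simp add: algebra_simps)
qed simp

lemma tshift_notin_range_h:
  assumes "x \<in> topspace XT" "x \<notin> range h"
  shows "tsh m x \<notin> range h"
proof
  assume "tsh m x \<in> range h"
  then obtain v where "tsh m x = h v" by blast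
  then have "x = h (v - of_int m)"
    using tshift_cancel[OF assms(1), of m] tshift_h by simp
  then show False using assms(2) by simp
qed

definition translates :: "'a set \<Rightarrow> 'a set" where
  "translates S = {tsh m y | m y. y \<in> S}"

lemma subset_translates: "S \<subseteq> translates S"
  unfolding translates_def by (force intro: exI[of _ 0])

lemma tshift_translates:
  assumes "y \<in> translates S" "S \<subseteq> topspace XT"
  shows "tsh k y \<in> translates S"
  using assms tshift_add unfolding translates_def by blast

abbreviation "line_complement \<equiv> subtopology XT (topspace XT - range h)"

lemma base_point_ex1:
  assumes "x \<in> topspace XT" "x \<notin> range h"
  shows "\<exists>!q. q \<in> XT closure_of connected_component_of_set line_complement x \<inter> range h"
proof -
  have "connected_component_of_set line_complement x \<in> connected_components_of line_complement"
    using assms by (simp add: connected_component_in_connected_components_of)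
  moreover have "\<forall>C \<in> connected_components_of line_complement. \<exists>!q. q \<in> XT closure_of C \<inter> range h"
    using lifted by (simp add: lifted_graph_def)
  ultimately show ?thesis
    by (rule bspec[rotated])
qed

lemma rR_unique:
  assumes x: "x \<in> topspace XT" "x \<notin> range h" and q: "q \<in> range h"
    and q_closure: "q \<in> XT closure_of connected_component_of_set line_complement x"
  shows "rR XT h x = q"
proof -
  let ?C = "connected_component_of_set line_complement x"
  have "rR XT h x = (THE q. q \<in> range h \<inter> XT closure_of ?C)"
    using x(2) by (simp add: rR_def)
  also have "range h \<inter> XT closure_of ?C = XT closure_of ?C \<inter> range h"
    by blast
  also have "(THE q. q \<in> XT closure_of ?C \<inter> range h) = q"
    by (rule the1_equality[OF base_point_ex1[OF x]]) (use q q_closure in blast)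
  finally show ?thesis .
qed

lemma rR_exists:
  assumes "x \<in> topspace XT" "x \<notin> range h"
  obtains q where "q \<in> range h" "q \<in> XT closure_of connected_component_of_set line_complement x"
  using ex1_implies_ex[OF base_point_ex1[OF assms]] by blast

lemma tshift_image_line_complement: "tsh m ` (topspace XT - range h) = topspace XT - range h"
proof (intro subset_antisym image_subsetI subsetI)
  show "tsh m z \<in> topspace XT - range h" if "z \<in> topspace XT - range h" for z
    using that by (simp add: tshift_in_topspace tshift_notin_range_h)
  show "y \<in> tsh m ` (topspace XT - range h)" if y: "y \<in> topspace XT - range h" for y
  proof (rule image_eqI)
    show "y = tsh m (tsh (- m) y)"
      using y by (simp add: tshift_cancel')
    show "tsh (- m) y \<in> topspace XT - range h"
      using y by (simp add: tshift_in_topspace tshift_notin_range_h)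
  qed
qed

lemma rR_tshift:
  assumes x: "x \<in> topspace XT"
  shows "rR XT h (tsh m x) = tsh m (rR XT h x)"
proof (cases "x \<in> range h")
  case True
  then obtain u where "x = h u" by blast
  then show ?thesis by (simp add: rR_def tshift_h)
next
  case False
  let ?C = "connected_component_of_set line_complement x"
  have hom: "homeomorphic_map line_complement line_complement (tsh m)"
    using tshift_image_line_complement
    by (intro homeomorphic_map_subtopologies[OF tshift_homeomorphic]) (simp add: Int_absorb1)
  obtain q where q: "q \<in> range h" "q \<in> XT closure_of ?C"
    using rR_exists[OF x False] .
  have "?C \<subseteq> topspace XT"
    using connected_component_of_subset_topspace[of line_complement x] by auto
  then have "tsh m ` (XT closure_of ?C) = XT closure_of (tsh m ` ?C)"
    using homeomorphic_map_closure_of[OF tshift_homeomorphic] by metis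
  also have "tsh m ` ?C = connected_component_of_set line_complement (tsh m x)"
    using homeomorphic_map_connected_component_of[OF hom] x False by simp
  finally have "tsh m q \<in> XT closure_of connected_component_of_set line_complement (tsh m x)"
    using q(2) by blast
  moreover have "tsh m q \<in> range h"
    using q(1) tshift_h by auto
  ultimately have "rR XT h (tsh m x) = tsh m q"
    using rR_unique x False tshift_in_topspace tshift_notin_range_h by blast
  then show ?thesis
    using rR_unique[OF x False q] by simp
qed

end

section \<open>Maps of degree one\<close>

locale degree_one_map = lifted_space +
  fixes F :: "'a \<Rightarrow> 'a"
  assumes cont: "continuous_map XT XT F" and deg: "degree_one XT \<tau> F"
begin

lemma F_in_topspace: "x \<in> topspace XT \<Longrightarrow> F x \<in> topspace XT"
  using continuous_map_image_subset_topspace[OF cont] by blast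

lemma funpow_F_in_topspace: "x \<in> topspace XT \<Longrightarrow> (F ^^ n) x \<in> topspace XT"
  using funpow_in_topspace[of XT F, OF F_in_topspace] .

lemma F_tshift_1: "x \<in> topspace XT \<Longrightarrow> F (tsh 1 x) = tsh 1 (F x)"
  using deg by (simp add: degree_one_def)

lemma F_tshift:
  assumes x: "x \<in> topspace XT"
  shows "F (tsh m x) = tsh m (F x)"
proof (induction m rule: int_induct[where k = 0])
  case (step1 i)
  have "F (tsh (i + 1) x) = F (tsh 1 (tsh i x))"
    using tshift_add[OF x, of 1 i] by (simp add: add.commute)
  also have "\<dots> = tsh 1 (tsh i (F x))"
    using F_tshift_1[OF tshift_in_topspace[OF x]] step1 by simp
  finally show ?case
    using tshift_add[OF F_in_topspace[OF x], of 1 i] by (simp add: add.commute)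
next
  case (step2 i)
  let ?y = "tsh (i - 1) x"
  have y: "?y \<in> topspace XT"
    by (rule tshift_in_topspace[OF x])
  have "tsh 1 (F ?y) = F (tsh 1 ?y)"
    using F_tshift_1[OF y] by simp
  also have "tsh 1 ?y = tsh i x"
    using tshift_add[OF x, of 1 "i - 1"] by simp
  finally have "tsh 1 (F ?y) = tsh i (F x)"
    using step2 by simp
  then have "tsh (- 1) (tsh 1 (F ?y)) = tsh (i - 1) (F x)"
    using tshift_add[OF F_in_topspace[OF x], of "- 1" i] by simp
  then show ?case
    using tshift_cancel[OF F_in_topspace[OF y], of 1] by simp
qed simp

lemma funpow_F_tshift:
  "x \<in> topspace XT \<Longrightarrow> (F ^^ n) (tsh m x) = tsh m ((F ^^ n) x)"
  by (induction n) (auto simp: F_tshift funpow_F_in_topspace tshift_in_topspace)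

lemma range_h_subset_TR: "range h \<subseteq> TR XT h F"
proof -
  have "range h \<subseteq> (\<Union>n. (F ^^ n) ` range h)"
    using UN_upper[of 0 UNIV "\<lambda>n. (F ^^ n) ` range h"] by simp
  also have "\<dots> \<subseteq> TR XT h F"
    unfolding TR_def by (rule closure_of_subset) (auto intro: funpow_F_in_topspace h_in_topspace)
  finally show ?thesis .
qed

lemma TR_subset_topspace: "TR XT h F \<subseteq> topspace XT"
  unfolding TR_def by (rule closure_of_subset_topspace)

lemma closedin_TR: "closedin XT (TR XT h F)"
  unfolding TR_def by simp

lemma tshift_image_TR: "tsh m ` TR XT h F = TR XT h F"
proof -
  define U where "U = (\<Union>n. (F ^^ n) ` range h)"
  have U_top: "U \<subseteq> topspace XT"
    unfolding U_def by (auto intro: funpow_F_in_topspace h_in_topspace)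
  have shift_U: "tsh k y \<in> U" if "y \<in> U" for y k
  proof -
    obtain n u where "y = (F ^^ n) (h u)"
      using \<open>y \<in> U\<close> unfolding U_def by blast
    then have "tsh k y = (F ^^ n) (h (u + of_int k))"
      using funpow_F_tshift[OF h_in_topspace] tshift_h by simp
    then show ?thesis unfolding U_def by blast
  qed
  have "tsh m ` U = U"
  proof (intro subset_antisym image_subsetI subsetI)
    show "y \<in> tsh m ` U" if "y \<in> U" for y
    proof (rule image_eqI)
      show "y = tsh m (tsh (- m) y)"
        using that U_top by (simp add: subset_iff tshift_cancel')
    qed (rule shift_U[OF that])
  qed (rule shift_U)
  then show ?thesis
    using homeomorphic_map_closure_of[OF tshift_homeomorphic U_top, of m] unfolding TR_def U_def
    by argo
qed

lemma tshift_interior_TR: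
  assumes "x \<in> XT interior_of TR XT h F"
  shows "tsh m x \<in> XT interior_of TR XT h F"
proof -
  have "XT interior_of TR XT h F = tsh m ` (XT interior_of TR XT h F)"
    using homeomorphic_map_interior_of[OF tshift_homeomorphic TR_subset_topspace, of m]
    unfolding tshift_image_TR .
  then show ?thesis
    using assms by blast
qed

lemma Xset_subset_topspace: "Xset XT h F \<subseteq> topspace XT"
  unfolding Xset_def by auto

lemma tshift_in_Xset_imp_zero:
  assumes x: "x \<in> Xset XT h F" and "tsh d x \<in> Xset XT h F"
  shows "d = 0"
proof -
  obtain u where u: "rR XT h x = h u" "u \<in> {0..<1}"
    using x unfolding Xset_def by blast
  obtain v where v: "rR XT h (tsh d x) = h v" "v \<in> {0..<1}"
    using assms(2) unfolding Xset_def by blast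
  have "x \<in> topspace XT"
    using x Xset_subset_topspace by blast
  then have "rR XT h (tsh d x) = h (u + of_int d)"
    using rR_tshift u tshift_h by simp
  then have "v = u + of_int d"
    using v inj_h by (simp add: inj_eq)
  then have "-1 < real_of_int d" "real_of_int d < 1"
    using u v by auto
  then show ?thesis by linarith
qed

end

section \<open>Branches of a sun-like map\<close>

locale basic_partition_map = degree_one_map +
  fixes \<Lambda> :: "'i set" and gam :: "'i \<Rightarrow> real \<Rightarrow> 'a" and N :: "'i \<Rightarrow> nat"
    and Xp :: "'i \<Rightarrow> nat \<Rightarrow> 'a set" and lab :: "'i \<Rightarrow> nat \<Rightarrow> 'i" and sh :: "'i \<Rightarrow> nat \<Rightarrow> int"
  assumes sun: "sun_like XT h F \<Lambda> gam"
    and partition: "basic_partition XT h \<tau> F \<Lambda> gam N Xp lab sh"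
begin

definition branch :: "'i \<Rightarrow> 'a set" where
  "branch i = gam i ` {0..1}"

lemma gam_embedding: "i \<in> \<Lambda> \<Longrightarrow> embedding_map (subtopology euclideanreal {0..1}) XT (gam i)"
  using sun by (simp add: sun_like_def)

lemma gam_continuous: "i \<in> \<Lambda> \<Longrightarrow> continuous_map (subtopology euclideanreal {0..1}) XT (gam i)"
  using gam_embedding
  by (metis continuous_map_in_subtopology embedding_map_def homeomorphic_imp_continuous_map)

lemma inj_on_gam: "i \<in> \<Lambda> \<Longrightarrow> inj_on (gam i) {0..1}"
  using gam_embedding unfolding embedding_map_def using homeomorphic_imp_injective_map by fastforce

lemma gam_in_topspace: "i \<in> \<Lambda> \<Longrightarrow> t \<in> {0..1} \<Longrightarrow> gam i t \<in> topspace XT"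
  using continuous_map_image_subset_topspace[OF gam_continuous] by fastforce

lemma branch_subset_topspace: "i \<in> \<Lambda> \<Longrightarrow> branch i \<subseteq> topspace XT"
  using gam_in_topspace by (auto simp: branch_def)

lemma branches_disjoint: "i \<in> \<Lambda> \<Longrightarrow> j \<in> \<Lambda> \<Longrightarrow> i \<noteq> j \<Longrightarrow> branch i \<inter> branch j = {}"
  using sun by (simp add: sun_like_def branch_def)

lemma gam_off_TR:
  assumes i: "i \<in> \<Lambda>" and t: "0 < t" "t \<le> 1"
  shows "gam i t \<notin> TR XT h F" and "rR XT h (gam i t) \<in> h ` {0..<1}"
proof -
  have "gam i t \<noteq> gam i 0"
    using inj_on_gam[OF i] t by (auto dest: inj_onD)
  moreover have "gam i t \<in> gam i ` {0..1}"
    using t by simp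
  ultimately have "gam i t \<in> (\<Union>i\<in>\<Lambda>. gam i ` {0..1} - {gam i 0})"
    using i by blast
  then have "gam i t \<in> (topspace XT - TR XT h F) \<inter> {x \<in> topspace XT. rR XT h x \<in> h ` {0..<1}}"
    using sun by (simp add: sun_like_def)
  then show "gam i t \<notin> TR XT h F" "rR XT h (gam i t) \<in> h ` {0..<1}"
    by auto
qed

lemma connectedin_gam_image:
  assumes "i \<in> \<Lambda>" "S \<subseteq> {0..1}" "connected S"
  shows "connectedin XT (gam i ` S)"
proof -
  have "connectedin (subtopology euclideanreal {0..1}) S"
    using assms by (simp add: connectedin_subtopology)
  then show ?thesis
    by (rule connectedin_continuous_map_image[OF gam_continuous[OF assms(1)]])
qed

lemma gam_0_in_closure:
  assumes i: "i \<in> \<Lambda>"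
  shows "gam i 0 \<in> XT closure_of (gam i ` {0<..1})"
proof -
  have "{0..1} \<inter> {0<..1} = {0<..(1::real)}"
    by auto
  then have "0 \<in> subtopology euclideanreal {0..1} closure_of {0<..(1::real)}"
    by (simp add: closure_of_subtopology)
  then show ?thesis
    using continuous_map_image_closure_subset[OF gam_continuous[OF i], of "{0<..1}"] by blast
qed

lemma gam_0_in_closure_complement_TR:
  assumes i: "i \<in> \<Lambda>"
  shows "gam i 0 \<in> XT closure_of (topspace XT - TR XT h F)"
proof -
  have "gam i ` {0<..1} \<subseteq> topspace XT - TR XT h F"
    using gam_off_TR(1)[OF i] gam_in_topspace[OF i] by auto
  then show ?thesis
    using gam_0_in_closure[OF i] closure_of_mono by blast
qed

lemma rR_gam_0_eq_rR_gam_1: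
  assumes i: "i \<in> \<Lambda>"
  shows "rR XT h (gam i 0) = rR XT h (gam i 1)"
proof -
  have off_line: "gam i ` {0<..1} \<subseteq> topspace XT - range h"
    using gam_off_TR(1)[OF i] gam_in_topspace[OF i] range_h_subset_TR by fastforce
  moreover have g1_in: "gam i 1 \<in> gam i ` {0<..1}"
    by simp
  ultimately have g1: "gam i 1 \<in> topspace XT" "gam i 1 \<notin> range h"
    by blast+
  show ?thesis
  proof (cases "gam i 0 \<in> range h")
    case True
    have "connectedin line_complement (gam i ` {0<..1})"
      using connectedin_gam_image[OF i, of "{0<..1}"] off_line
      by (simp add: connectedin_subtopology subset_iff)
    then have "gam i ` {0<..1} \<subseteq> connected_component_of_set line_complement (gam i 1)"
      using g1_in unfolding connected_component_of_def by blast
    then have "gam i 0 \<in> XT closure_of connected_component_of_set line_complement (gam i 1)"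
      using gam_0_in_closure[OF i] closure_of_mono by blast
    then have "rR XT h (gam i 1) = gam i 0"
      by (rule rR_unique[OF g1 True])
    moreover have "rR XT h (gam i 0) = gam i 0"
      using True by (simp add: rR_def)
    ultimately show ?thesis
      by argo
  next
    case False
    have "gam i ` {0..1} = insert (gam i 0) (gam i ` {0<..1})"
      by (auto simp: image_iff less_eq_real_def)
    then have "gam i ` {0..1} \<subseteq> topspace XT - range h"
      using off_line False gam_in_topspace[OF i] by simp
    then have "connectedin line_complement (gam i ` {0..1})"
      using connectedin_gam_image[OF i, of "{0..1}"] by (simp add: connectedin_subtopology)
    then have "connected_component_of line_complement (gam i 0) (gam i 1)"
      unfolding connected_component_of_def by force
    then have "connected_component_of line_complement (gam i 0) = connected_component_of line_complement (gam i 1)"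
      using connected_component_of_equiv by metis
    then show ?thesis
      using False g1 by (simp add: rR_def)
  qed
qed

lemma branch_subset_Xset:
  assumes i: "i \<in> \<Lambda>"
  shows "branch i \<subseteq> Xset XT h F"
proof
  fix x assume "x \<in> branch i"
  then obtain t where t: "t \<in> {0..1}" "x = gam i t"
    unfolding branch_def by blast
  show "x \<in> Xset XT h F"
  proof (cases "t = 0")
    case True
    then show ?thesis
      using t gam_0_in_closure_complement_TR[OF i] rR_gam_0_eq_rR_gam_1[OF i] gam_off_TR(2)[OF i, of 1]
        gam_in_topspace[OF i]
      unfolding Xset_def by auto
  next
    case False
    then have "x \<in> topspace XT - TR XT h F" "rR XT h x \<in> h ` {0..<1}"
      using gam_off_TR[OF i, of t] gam_in_topspace[OF i] t by auto
    then show ?thesis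
      unfolding Xset_def using closure_of_subset[of "topspace XT - TR XT h F" XT] by auto
  qed
qed

lemma branch_Int_interior_TR:
  assumes i: "i \<in> \<Lambda>"
  shows "branch i \<inter> XT interior_of TR XT h F = {}"
proof -
  have "gam i t \<notin> XT interior_of TR XT h F" if t: "t \<in> {0..1}" for t
  proof (cases "t = 0")
    case True
    then show ?thesis
      using gam_0_in_closure_complement_TR[OF i] closure_of_complement by (metis Diff_iff)
  next
    case False
    then show ?thesis
      using gam_off_TR(1)[OF i, of t] t interior_of_subset by fastforce
  qed
  then show ?thesis
    unfolding branch_def by blast
qed

lemma translates_Int_Xset:
  assumes i: "i \<in> \<Lambda>" and A: "A \<subseteq> branch i"
  shows "translates A \<inter> Xset XT h F = A"
proof
  show "translates A \<inter> Xset XT h F \<subseteq> A"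
  proof
    fix x assume x: "x \<in> translates A \<inter> Xset XT h F"
    then obtain m y where my: "x = tsh m y" "y \<in> A"
      unfolding translates_def by blast
    then have "m = 0"
      using tshift_in_Xset_imp_zero A branch_subset_Xset[OF i] x by blast
    then show "x \<in> A" using my by simp
  qed
  show "A \<subseteq> translates A \<inter> Xset XT h F"
    using subset_translates A branch_subset_Xset[OF i] by blast
qed

section \<open>Partition elements and the sets \<open>\<langle>A\<^sub>0 \<dots> A\<^sub>n\<rangle>\<close>\<close>

abbreviation "piece p \<equiv> Xp (fst p) (snd p)"
abbreviation "bracket \<equiv> bra XT h \<tau> F Xp"

definition word :: "('i \<times> nat) list \<Rightarrow> bool" where
  "word w \<longleftrightarrow> w \<noteq> [] \<and> set w \<subseteq> pidx \<Lambda> N"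

lemma pidx_fst: "p \<in> pidx \<Lambda> N \<Longrightarrow> fst p \<in> \<Lambda>"
  by (auto simp: pidx_def)

lemma last_word: "word w \<Longrightarrow> last w \<in> pidx \<Lambda> N"
  unfolding word_def using last_in_set by blast

lemma piece_cinterval:
  assumes "(i, j) \<in> pidx \<Lambda> N"
  shows "cinterval gam i (Xp i j)"
proof -
  have "\<forall>(i, j) \<in> pidx \<Lambda> N. cinterval gam i (Xp i j)"
    using partition unfolding basic_partition_def by (rule conjunct1)
  then show ?thesis
    using assms by auto
qed

lemma pieces_ordered:
  assumes "i \<in> \<Lambda>" "1 \<le> j" "j < j'" "j' \<le> N i" "s \<in> {0..1}" "t \<in> {0..1}"
    and "gam i s \<in> Xp i j" "gam i t \<in> Xp i j'"
  shows "s < t"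
proof -
  have "\<forall>i\<in>\<Lambda>. \<forall>j j'. 1 \<le> j \<and> j < j' \<and> j' \<le> N i \<longrightarrow>
          (\<forall>s\<in>{0..1}. \<forall>t\<in>{0..1}. gam i s \<in> Xp i j \<and> gam i t \<in> Xp i j' \<longrightarrow> s < t)"
    using partition unfolding basic_partition_def by (rule conjunct1[OF conjunct2])
  then show ?thesis
    using assms by meson
qed

lemma piece_image:
  assumes "(i, j) \<in> pidx \<Lambda> N"
  shows "lab i j \<in> \<Lambda>"
    and "F ` Xp i j \<subseteq> tsh (sh i j) ` branch (lab i j) \<union> XT interior_of TR XT h F"
    and "\<exists>a\<in>{0..1}. Xp i j \<subseteq> gam i ` {a..1} \<and> gam i a \<in> Xp i j \<and>
           F (gam i a) = tsh (sh i j) (gam (lab i j) 0)"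
proof -
  have all: "\<forall>(i, j) \<in> pidx \<Lambda> N. lab i j \<in> \<Lambda> \<and>
          F ` Xp i j \<subseteq> tsh (sh i j) ` (gam (lab i j) ` {0..1}) \<union> XT interior_of TR XT h F \<and>
          (\<exists>a\<in>{0..1}. Xp i j \<subseteq> gam i ` {a..1} \<and> gam i a \<in> Xp i j \<and>
                      F (gam i a) = tsh (sh i j) (gam (lab i j) 0))"
    using partition unfolding basic_partition_def by (rule conjunct1[OF conjunct2[OF conjunct2]])
  have "lab i j \<in> \<Lambda> \<and>
          F ` Xp i j \<subseteq> tsh (sh i j) ` (gam (lab i j) ` {0..1}) \<union> XT interior_of TR XT h F \<and>
          (\<exists>a\<in>{0..1}. Xp i j \<subseteq> gam i ` {a..1} \<and> gam i a \<in> Xp i j \<and>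
                      F (gam i a) = tsh (sh i j) (gam (lab i j) 0))"
    using bspec[OF all assms] by (simp only: prod.case)
  then show "lab i j \<in> \<Lambda>"
    and "F ` Xp i j \<subseteq> tsh (sh i j) ` branch (lab i j) \<union> XT interior_of TR XT h F"
    and "\<exists>a\<in>{0..1}. Xp i j \<subseteq> gam i ` {a..1} \<and> gam i a \<in> Xp i j \<and>
           F (gam i a) = tsh (sh i j) (gam (lab i j) 0)"
    unfolding branch_def by blast+
qed

lemma piece_subset_branch: "p \<in> pidx \<Lambda> N \<Longrightarrow> piece p \<subseteq> branch (fst p)"
  using piece_cinterval[of "fst p" "snd p"] unfolding cinterval_def branch_def by fastforce

lemma piece_subset_Xset: "p \<in> pidx \<Lambda> N \<Longrightarrow> piece p \<subseteq> Xset XT h F"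
  using piece_subset_branch branch_subset_Xset pidx_fst by blast

lemma piece_subset_topspace: "p \<in> pidx \<Lambda> N \<Longrightarrow> piece p \<subseteq> topspace XT"
  using piece_subset_Xset Xset_subset_topspace by blast

lemma piece_ends_exist:
  assumes p: "(i, j) \<in> pidx \<Lambda> N"
  shows "\<exists>a b. 0 \<le> a \<and> a \<le> b \<and> b \<le> 1 \<and> Xp i j = gam i ` {a..b} \<and>
           F (gam i a) = tsh (sh i j) (gam (lab i j) 0)"
proof -
  have i: "i \<in> \<Lambda>"
    using p by (auto simp: pidx_def)
  obtain a0 b0 where ab: "0 \<le> a0" "a0 \<le> b0" "b0 \<le> 1" "Xp i j = gam i ` {a0..b0}"
    using piece_cinterval[OF p] unfolding cinterval_def by auto
  obtain a where a: "a \<in> {0..1}" "Xp i j \<subseteq> gam i ` {a..1}" "gam i a \<in> Xp i j"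
      "F (gam i a) = tsh (sh i j) (gam (lab i j) 0)"
    using piece_image(3)[OF p] by blast
  have "gam i a0 \<in> gam i ` {a..1}"
    using ab a(2) by auto
  then obtain t where t: "t \<in> {a..1}" "gam i a0 = gam i t"
    by blast
  then have "a \<le> a0"
    using inj_on_gam[OF i] ab a(1) by (auto dest: inj_onD)
  have "gam i a \<in> gam i ` {a0..b0}"
    using ab a(3) by simp
  then obtain t' where t': "t' \<in> {a0..b0}" "gam i a = gam i t'"
    by blast
  then have "a0 \<le> a"
    using inj_on_gam[OF i] ab a(1) by (auto dest: inj_onD)
  with \<open>a \<le> a0\<close> have "a = a0"
    by simp
  then show ?thesis
    using ab a by blast
qed

definition piece_ends :: "'i \<Rightarrow> nat \<Rightarrow> real \<times> real" where
  "piece_ends i j = (SOME (a, b). 0 \<le> a \<and> a \<le> b \<and> b \<le> 1 \<and> Xp i j = gam i ` {a..b} \<and>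
                        F (gam i a) = tsh (sh i j) (gam (lab i j) 0))"

abbreviation "lo i j \<equiv> fst (piece_ends i j)"
abbreviation "hi i j \<equiv> snd (piece_ends i j)"

lemma piece_ends:
  assumes "(i, j) \<in> pidx \<Lambda> N"
  shows "0 \<le> lo i j" "lo i j \<le> hi i j" "hi i j \<le> 1" "Xp i j = gam i ` {lo i j..hi i j}"
    and "F (gam i (lo i j)) = tsh (sh i j) (gam (lab i j) 0)"
proof -
  have "(\<lambda>(a, b). 0 \<le> a \<and> a \<le> b \<and> b \<le> 1 \<and> Xp i j = gam i ` {a..b} \<and>
           F (gam i a) = tsh (sh i j) (gam (lab i j) 0)) (piece_ends i j)"
    unfolding piece_ends_def by (rule someI_ex) (use piece_ends_exist[OF assms] in auto)
  then show "0 \<le> lo i j" "lo i j \<le> hi i j" "hi i j \<le> 1" "Xp i j = gam i ` {lo i j..hi i j}"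
    and "F (gam i (lo i j)) = tsh (sh i j) (gam (lab i j) 0)"
    by (simp_all add: case_prod_beta)
qed

definition follows :: "('i \<times> nat) list \<Rightarrow> 'a \<Rightarrow> bool" where
  "follows w x \<longleftrightarrow> x \<in> topspace XT \<and> (\<forall>k < length w. (F ^^ k) x \<in> translates (piece (w ! k)))"

lemma bracket_eq: "bracket w = (F ^^ (length w - 1)) ` Collect (follows w) \<inter> Xset XT h F"
  unfolding bra_def follows_def translates_def by simp

lemma follows_snoc:
  "follows (w @ [B]) x \<longleftrightarrow> follows w x \<and> (F ^^ length w) x \<in> translates (piece B)"
  unfolding follows_def by (auto simp: nth_append less_Suc_eq)

lemma follows_tshift:
  assumes "set w \<subseteq> pidx \<Lambda> N" "follows w x"
  shows "follows w (tsh m x)"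
  unfolding follows_def
proof (intro conjI allI impI)
  show "tsh m x \<in> topspace XT"
    using assms(2) tshift_in_topspace by (simp add: follows_def)
  fix k assume k: "k < length w"
  then have "piece (w ! k) \<subseteq> topspace XT"
    using assms(1) piece_subset_topspace nth_mem by blast
  then show "(F ^^ k) (tsh m x) \<in> translates (piece (w ! k))"
    using assms(2) k tshift_translates funpow_F_tshift by (simp add: follows_def)
qed

lemma funpow_F_length:
  "word w \<Longrightarrow> (F ^^ length w) x = F ((F ^^ (length w - 1)) x)"
  by (cases w) (auto simp: word_def)

lemma bracket_snoc:
  assumes w: "word w" and B: "B \<in> pidx \<Lambda> N"
  shows "bracket (w @ [B]) = translates (F ` bracket w) \<inter> translates (piece B) \<inter> Xset XT h F"
proof (intro subset_antisym subsetI)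
  fix y assume "y \<in> bracket (w @ [B])"
  then obtain x where x: "follows w x" "y = (F ^^ length w) x" "y \<in> translates (piece B)"
      "y \<in> Xset XT h F"
    unfolding bracket_eq follows_snoc by auto
  have "(F ^^ (length w - 1)) x \<in> translates (piece (last w))"
    using x(1) w by (cases w rule: rev_cases) (auto simp: follows_def word_def nth_append)
  then obtain m a where ma: "(F ^^ (length w - 1)) x = tsh m a" "a \<in> piece (last w)"
    unfolding translates_def by blast
  have a: "a \<in> Xset XT h F" "a \<in> topspace XT"
    using ma(2) piece_subset_Xset[OF last_word[OF w]] Xset_subset_topspace by auto
  have "follows w (tsh (- m) x)"
    using follows_tshift w x(1) by (simp add: word_def)
  moreover have "(F ^^ (length w - 1)) (tsh (- m) x) = a"
    using x(1) ma(1) a(2) funpow_F_tshift tshift_cancel by (simp add: follows_def)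
  ultimately have "a \<in> bracket w"
    unfolding bracket_eq using a(1) by blast
  moreover have "y = tsh m (F a)"
    using x(2) ma(1) F_tshift a(2) funpow_F_length[OF w] by simp
  ultimately show "y \<in> translates (F ` bracket w) \<inter> translates (piece B) \<inter> Xset XT h F"
    using x(3,4) unfolding translates_def by blast
next
  fix y assume y: "y \<in> translates (F ` bracket w) \<inter> translates (piece B) \<inter> Xset XT h F"
  then obtain m z where mz: "y = tsh m (F z)" "z \<in> bracket w"
    unfolding translates_def by blast
  then obtain x where x: "follows w x" "z = (F ^^ (length w - 1)) x"
    unfolding bracket_eq by blast
  have xT: "x \<in> topspace XT"
    using x(1) by (simp add: follows_def)
  have y_eq: "(F ^^ length w) (tsh m x) = y"
    using x(2) mz(1) funpow_F_tshift[OF xT] F_tshift[OF funpow_F_in_topspace[OF xT]]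
      funpow_F_length[OF w] by simp
  have "follows (w @ [B]) (tsh m x)"
    unfolding follows_snoc using follows_tshift w x(1) y y_eq by (simp add: word_def)
  then have "y \<in> (F ^^ length w) ` Collect (follows (w @ [B]))"
    using y_eq by blast
  then show "y \<in> bracket (w @ [B])"
    unfolding bracket_eq using y by simp
qed

lemma bracket_singleton:
  assumes B: "B \<in> pidx \<Lambda> N"
  shows "bracket [B] = piece B"
proof -
  have "bracket [B] = translates (piece B) \<inter> Xset XT h F"
    unfolding bracket_eq follows_def using Xset_subset_topspace translates_def by auto
  also have "\<dots> = piece B"
    by (rule translates_Int_Xset[OF pidx_fst[OF B] piece_subset_branch[OF B]])
  finally show ?thesis .
qed

lemma bracket_subset_last:
  assumes w: "word w"
  shows "bracket w \<subseteq> piece (last w)"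
proof -
  have "bracket w \<subseteq> translates (piece (last w)) \<inter> Xset XT h F"
    using w unfolding bracket_eq follows_def word_def by (auto simp: last_conv_nth)
  also have "\<dots> = piece (last w)"
    using last_word[OF w] by (intro translates_Int_Xset[OF pidx_fst piece_subset_branch])
  finally show ?thesis .
qed

lemma bracket_append_cong:
  assumes "word w1" "word w2" "bracket w1 = bracket w2" "set u \<subseteq> pidx \<Lambda> N"
  shows "bracket (w1 @ u) = bracket (w2 @ u)"
  using assms(4)
proof (induction u rule: rev_induct)
  case (snoc B u)
  then have words: "word (w1 @ u)" "word (w2 @ u)" and B: "B \<in> pidx \<Lambda> N"
    using assms(1,2) by (auto simp: word_def)
  have "bracket ((w1 @ u) @ [B]) = bracket ((w2 @ u) @ [B])"
    using snoc bracket_snoc[OF words(1) B] bracket_snoc[OF words(2) B] by simp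
  then show ?case
    by simp
qed (simp add: assms(3))

lemma bracket_drop:
  assumes w: "word w" and j: "j < length w" and full: "bracket (take (Suc j) w) = piece (w ! j)"
  shows "bracket w = bracket (drop j w)"
proof -
  have wj: "w ! j \<in> pidx \<Lambda> N"
    using w j unfolding word_def by auto
  have "bracket (take (Suc j) w @ drop (Suc j) w) = bracket ([w ! j] @ drop (Suc j) w)"
  proof (rule bracket_append_cong)
    show "word (take (Suc j) w)" "word [w ! j]" "set (drop (Suc j) w) \<subseteq> pidx \<Lambda> N"
      using w j wj unfolding word_def by (auto dest: in_set_takeD in_set_dropD)
    show "bracket (take (Suc j) w) = bracket [w ! j]"
      using full bracket_singleton[OF wj] by simp
  qed
  then show ?thesis
    using j by (simp add: Cons_nth_drop_Suc)
qed

lemma bracket_snoc_mem: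
  assumes w: "word w" and last: "last w = (i, j)" and B: "B \<in> pidx \<Lambda> N"
    and y: "y \<in> bracket (w @ [B])"
  shows "fst B = lab i j" and "y \<in> tsh (- sh i j) ` F ` bracket w"
proof -
  have ij: "(i, j) \<in> pidx \<Lambda> N"
    using last_word[OF w] last by simp
  have l: "lab i j \<in> \<Lambda>" and B_branch: "fst B \<in> \<Lambda>"
    using piece_image(1)[OF ij] pidx_fst[OF B] .
  have y_trans: "y \<in> translates (F ` bracket w)" and y_B: "y \<in> translates (piece B)"
    and y_X: "y \<in> Xset XT h F"
    using y bracket_snoc[OF w B] by auto
  obtain m z where mz: "y = tsh m (F z)" "z \<in> bracket w"
    using y_trans unfolding translates_def by blast
  have z: "z \<in> Xp i j"
    using bracket_subset_last[OF w] last mz(2) by auto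
  have "y \<in> piece B"
    using y_B y_X translates_Int_Xset[OF B_branch piece_subset_branch[OF B]] by blast
  then have y_branch: "y \<in> branch (fst B)"
    using piece_subset_branch[OF B] by blast
  then have "F z \<notin> XT interior_of TR XT h F"
    using mz(1) tshift_interior_TR branch_Int_interior_TR[OF B_branch] by blast
  then obtain g where g: "g \<in> branch (lab i j)" "F z = tsh (sh i j) g"
    using piece_image(2)[OF ij] z by blast
  have gX: "g \<in> Xset XT h F" "g \<in> topspace XT"
    using g(1) branch_subset_Xset[OF l] branch_subset_topspace[OF l] by auto
  have "y = tsh (m + sh i j) g"
    using mz(1) g(2) tshift_add gX(2) by simp
  moreover have "m + sh i j = 0"
    using tshift_in_Xset_imp_zero[OF gX(1)] y_X calculation by simp
  ultimately have "y = g"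
    by simp
  then show "fst B = lab i j"
    using branches_disjoint[OF B_branch l] y_branch g(1) by blast
  have "tsh (- sh i j) (F z) = g"
    using g(2) tshift_cancel gX(2) by simp
  then show "y \<in> tsh (- sh i j) ` F ` bracket w"
    using \<open>y = g\<close> mz(2) by blast
qed

lemma bracket_snoc_eq:
  assumes w: "word w" and last: "last w = (i, j)" and B: "B \<in> pidx \<Lambda> N" and l: "fst B = lab i j"
  shows "bracket (w @ [B]) = tsh (- sh i j) ` F ` bracket w \<inter> piece B"
proof (intro subset_antisym subsetI)
  fix y assume "y \<in> bracket (w @ [B])"
  then show "y \<in> tsh (- sh i j) ` F ` bracket w \<inter> piece B"
    using bracket_snoc_mem[OF w last B] bracket_subset_last[of "w @ [B]"] w B
    by (auto simp: word_def)
next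
  fix y assume y: "y \<in> tsh (- sh i j) ` F ` bracket w \<inter> piece B"
  then have "y \<in> translates (F ` bracket w)" "y \<in> translates (piece B)" "y \<in> Xset XT h F"
    using subset_translates piece_subset_Xset[OF B] unfolding translates_def by blast+
  then show "y \<in> bracket (w @ [B])"
    using bracket_snoc[OF w B] by blast
qed

lemma shifted_image_Int_branch:
  assumes w: "word w" and last: "last w = (i, j)"
    and bw: "bracket w = gam i ` {lo i j..d}" and d: "lo i j \<le> d" "d \<le> hi i j"
  shows "\<exists>s\<in>{0..1}. tsh (- sh i j) ` F ` bracket w \<inter> branch (lab i j) = gam (lab i j) ` {0..s}"
proof -
  have ij: "(i, j) \<in> pidx \<Lambda> N"
    using last_word[OF w] last by simp
  have i: "i \<in> \<Lambda>" and l: "lab i j \<in> \<Lambda>"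
    using pidx_fst[OF ij] piece_image(1)[OF ij] by auto
  note ends = piece_ends[OF ij]
  define C where "C = tsh (- sh i j) ` F ` bracket w"
  have segment: "{lo i j..d} \<subseteq> {0..1}"
    using ends d by auto
  have "compactin XT (gam i ` {lo i j..d})"
    using segment by (intro image_compactin[OF _ gam_continuous[OF i]]) (simp add: compactin_subtopology)
  then have compact: "compactin XT C"
    unfolding C_def bw by (intro image_compactin[OF _ tshift_continuous] image_compactin[OF _ cont])
  have "connectedin XT (gam i ` {lo i j..d})"
    using connectedin_gam_image[OF i segment] by simp
  then have connected: "connectedin XT C"
    unfolding C_def bw
    by (intro connectedin_continuous_map_image[OF tshift_continuous]
        connectedin_continuous_map_image[OF cont])
  have sub: "C \<subseteq> branch (lab i j) \<union> XT interior_of TR XT h F"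
  proof
    fix c assume "c \<in> C"
    then obtain z where z: "z \<in> bracket w" "c = tsh (- sh i j) (F z)"
      unfolding C_def by blast
    have "F z \<in> tsh (sh i j) ` branch (lab i j) \<union> XT interior_of TR XT h F"
      using piece_image(2)[OF ij] bracket_subset_last[OF w] last z(1) by auto
    then show "c \<in> branch (lab i j) \<union> XT interior_of TR XT h F"
      using z(2) tshift_interior_TR tshift_cancel branch_subset_topspace[OF l] by auto
  qed
  have "gam i (lo i j) \<in> bracket w"
    unfolding bw using d by simp
  moreover have "tsh (- sh i j) (F (gam i (lo i j))) = gam (lab i j) 0"
    using ends(5) tshift_cancel gam_in_topspace[OF l] by simp
  ultimately have "gam (lab i j) 0 \<in> C"
    unfolding C_def by (metis image_eqI)
  then show ?thesis
    using compact_connected_Int_arc[OF gam_embedding[OF l] closedin_TR gam_off_TR(1)[OF l]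
        branch_Int_interior_TR[OF l, unfolded branch_def] compact connected sub[unfolded branch_def]]
    unfolding C_def branch_def by blast
qed

lemma bracket_initial_segment:
  assumes "word w" "bracket w \<noteq> {}" "last w = (l, k)"
  shows "\<exists>d. lo l k \<le> d \<and> d \<le> hi l k \<and> bracket w = gam l ` {lo l k..d}"
  using assms
proof (induction w arbitrary: l k rule: rev_induct)
  case (snoc B w)
  then have B: "B = (l, k)" "(l, k) \<in> pidx \<Lambda> N"
    by (auto simp: word_def)
  note ends = piece_ends[OF B(2)]
  show ?case
  proof (cases "w = []")
    case True
    then show ?thesis
      using bracket_singleton[OF B(2)] B(1) ends by auto
  next
    case False
    then have w: "word w"
      using snoc.prems by (simp add: word_def)
    obtain i j where last: "last w = (i, j)"
      by (cases "last w")
    obtain y where y: "y \<in> bracket (w @ [B])"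
      using snoc.prems by blast
    have l: "l = lab i j" and "bracket w \<noteq> {}"
      using bracket_snoc_mem[OF w last B(2)] y B(1) by auto
    then obtain d where d: "lo i j \<le> d" "d \<le> hi i j" "bracket w = gam i ` {lo i j..d}"
      using snoc.IH w last by blast
    obtain s where s: "s \<in> {0..1}"
        "tsh (- sh i j) ` F ` bracket w \<inter> branch l = gam l ` {0..s}"
      using shifted_image_Int_branch[OF w last d(3,1,2)] l by blast
    have "bracket (w @ [B]) = tsh (- sh i j) ` F ` bracket w \<inter> branch l \<inter> Xp l k"
      using bracket_snoc_eq[OF w last B(2)] l B piece_subset_branch[OF B(2)] by auto
    also have "\<dots> = gam l ` ({0..s} \<inter> {lo l k..hi l k})"
      using s ends inj_on_image_Int[OF inj_on_gam[OF pidx_fst[OF B(2)]], of "{0..s}" "{lo l k..hi l k}"]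
      by auto
    also have "{0..s} \<inter> {lo l k..hi l k} = {lo l k..min s (hi l k)}"
      using ends by auto
    finally have e: "bracket (w @ [B]) = gam l ` {lo l k..min s (hi l k)}" .
    then have "lo l k \<le> min s (hi l k)"
      using snoc.prems by (metis atLeastatMost_empty' image_empty)
    then show ?thesis
      using e by (intro exI[of _ "min s (hi l k)"]) simp
  qed
qed (simp add: word_def)

section \<open>The covering graph\<close>

abbreviation "sim \<equiv> simr XT h \<tau> F Xp"
abbreviation "vertex_of \<equiv> cls XT h \<tau> F \<Lambda> N Xp"

lemma simr_last_eq:
  assumes "sim as bs"
  shows "last as = last bs"
proof -
  obtain k where "\<forall>i \<le> k. as ! (length as - 1 - i) = bs ! (length bs - 1 - i)"
    using assms unfolding simr_def Let_def by blast
  then have "as ! (length as - 1) = bs ! (length bs - 1)"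
    by auto
  moreover have "as \<noteq> []" "bs \<noteq> []"
    using assms by (auto simp: simr_def)
  ultimately show ?thesis
    by (simp add: last_conv_nth)
qed

lemma simr_imp_bracket_eq:
  assumes a: "word as" and b: "word bs" and s: "sim as bs"
  shows "bracket as = bracket bs"
proof -
  define n m where "n = length as - 1" and "m = length bs - 1"
  have la: "length as = Suc n" and lb: "length bs = Suc m"
    using a b unfolding word_def n_def m_def by (cases as; cases bs; auto)+
  obtain k where k: "k \<le> min n m" "\<forall>i \<le> k. as ! (n - i) = bs ! (m - i)"
    "bracket (take (n - k + 1) as) = piece (as ! (n - k))"
    "bracket (take (m - k + 1) bs) = piece (bs ! (m - k))"
    using s unfolding simr_def Let_def n_def m_def by blast
  have "bracket as = bracket (drop (n - k) as)"
    by (rule bracket_drop[OF a]) (use la k(3) in auto)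
  moreover have "bracket bs = bracket (drop (m - k) bs)"
    by (rule bracket_drop[OF b]) (use lb k(4) in auto)
  moreover have "drop (n - k) as = drop (m - k) bs"
  proof (rule nth_equalityI)
    show "length (drop (n - k) as) = length (drop (m - k) bs)"
      using la lb k(1) by simp
    fix i assume "i < length (drop (n - k) as)"
    then have i: "i \<le> k"
      using la k(1) by simp
    have "drop (n - k) as ! i = as ! (n - (k - i))"
      using la k(1) i by simp
    also have "\<dots> = bs ! (m - (k - i))"
      using k(2) by simp
    also have "\<dots> = drop (m - k) bs ! i"
      using lb k(1) i by simp
    finally show "drop (n - k) as ! i = drop (m - k) bs ! i" .
  qed
  ultimately show ?thesis
    by simp
qed

lemma simr_refl:
  assumes a: "word as"
  shows "sim as as"
proof -
  define n where "n = length as - 1"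
  have la: "length as = Suc n"
    using a unfolding word_def n_def by (cases as) auto
  have "as ! 0 \<in> pidx \<Lambda> N"
    using a la unfolding word_def by (metis nth_mem subsetD zero_less_Suc)
  moreover have "take 1 as = [as ! 0]"
    using la by (cases as) auto
  ultimately have "bracket (take (n - n + 1) as) = piece (as ! (n - n))"
    using bracket_singleton by simp
  then show ?thesis
    unfolding simr_def Let_def n_def[symmetric] using a unfolding word_def
    by (intro conjI exI[of _ n]) auto
qed

lemma simr_if_full:
  assumes "word as" "word bs" "last as = last bs"
    and "bracket as = piece (last as)" "bracket bs = piece (last bs)"
  shows "sim as bs"
  using assms unfolding simr_def Let_def word_def
  by (intro conjI exI[of _ 0]) (auto simp: last_conv_nth)

lemma simr_transfer:
  assumes u: "word u" "bracket u = piece (last u)" and v: "word v" "bracket v = piece (last v)"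
    and last: "last u = last v" and s: "sim u bs" and bs: "set bs \<subseteq> pidx \<Lambda> N"
  shows "sim v bs"
proof -
  have b: "word bs"
    using s bs by (simp add: word_def simr_def)
  have "last bs = last v"
    using simr_last_eq[OF s] last by simp
  moreover have "bracket bs = piece (last bs)"
    using simr_imp_bracket_eq[OF u(1) b s] u(2) last calculation by simp
  ultimately show ?thesis
    using simr_if_full[OF v(1) b] v(2) by simp
qed

lemma vertex_of_eq_singleton:
  assumes w: "word w" and full: "bracket w = piece (last w)"
  shows "vertex_of w = vertex_of [last w]"
proof -
  have last_w: "word [last w]" "bracket [last w] = piece (last [last w])"
    using last_word[OF w] bracket_singleton by (auto simp: word_def)
  show ?thesis
    unfolding cls_def using simr_transfer[OF w full last_w] simr_transfer[OF last_w w full] by auto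
qed

lemma vertex_bracket_nonempty:
  assumes w: "word w" and vertex: "vertex_of w \<in> cg_vertices XT h \<tau> F \<Lambda> N Xp"
  shows "bracket w \<noteq> {}"
proof -
  obtain bs where bs: "vertex_of w = vertex_of bs" "word bs" "bracket bs \<noteq> {}"
    using vertex unfolding cg_vertices_def word_def by blast
  have "bs \<in> vertex_of bs"
    using simr_refl[OF bs(2)] bs(2) unfolding cls_def word_def by simp
  then have "bs \<in> vertex_of w"
    using bs(1) by simp
  then have "sim w bs"
    unfolding cls_def by simp
  then show ?thesis
    using simr_imp_bracket_eq[OF w bs(2)] bs(3) by simp
qed

lemma cg_arrow_to_piece:
  assumes vertex: "vertex_of w \<in> cg_vertices XT h \<tau> F \<Lambda> N Xp" and w: "word w"
    and p: "p \<in> pidx \<Lambda> N" and full: "bracket (w @ [p]) = piece p"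
  shows "cg_arrow XT h \<tau> F \<Lambda> N Xp (vertex_of w) (vertex_of [p])"
proof -
  have "vertex_of (w @ [p]) = vertex_of [p]"
    using vertex_of_eq_singleton[of "w @ [p]"] w p full by (simp add: word_def)
  moreover obtain i j where ij: "p = (i, j)"
    by (cases p)
  then have "gam i (lo i j) \<in> piece p"
    using piece_ends[of i j] p by auto
  then have "vertex_of [p] \<in> cg_vertices XT h \<tau> F \<Lambda> N Xp"
    unfolding cg_vertices_def using p bracket_singleton[OF p] by auto
  ultimately show ?thesis
    unfolding cg_arrow_def using vertex w p by (intro conjI exI[of _ w] exI[of _ p]) (auto simp: word_def)
qed

lemma next_piece_reached:
  assumes w: "word as" and last: "last as = (i, j)" and k: "(lab i j, k) \<in> pidx \<Lambda> N"
    and ne: "bracket (as @ [(lab i j, k)]) \<noteq> {}"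
  obtains d t v where "lo i j \<le> d" "d \<le> hi i j" "bracket as = gam i ` {lo i j..d}"
    and "t \<in> {lo i j..d}" and "v \<in> {lo (lab i j) k..hi (lab i j) k}"
    and "tsh (- sh i j) (F (gam i t)) = gam (lab i j) v"
proof -
  obtain y where y: "y \<in> bracket (as @ [(lab i j, k)])"
    using ne by blast
  have y_image: "y \<in> tsh (- sh i j) ` F ` bracket as"
    using bracket_snoc_mem(2)[OF w last k y] .
  then have "bracket as \<noteq> {}"
    by blast
  then obtain d where d: "lo i j \<le> d" "d \<le> hi i j" "bracket as = gam i ` {lo i j..d}"
    using bracket_initial_segment[OF w _ last] by blast
  have "y \<in> tsh (- sh i j) ` F ` gam i ` {lo i j..d}"
    using y_image d(3) by simp
  then obtain t where t: "t \<in> {lo i j..d}" "y = tsh (- sh i j) (F (gam i t))"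
    by blast
  have "y \<in> Xp (lab i j) k"
    using bracket_subset_last[of "as @ [(lab i j, k)]"] w k y by (auto simp: word_def)
  then obtain v where v: "v \<in> {lo (lab i j) k..hi (lab i j) k}" "y = gam (lab i j) v"
    using piece_ends(4)[OF k] by auto
  show ?thesis
    using that[OF d t(1) v(1)] t(2) v(2) by simp
qed

lemma earlier_piece_below:
  assumes k: "(l, k) \<in> pidx \<Lambda> N" and j': "j' \<in> {1..<k}" and v: "v \<in> {lo l k..hi l k}"
  shows "(l, j') \<in> pidx \<Lambda> N" and "hi l j' < v"
proof -
  show lj: "(l, j') \<in> pidx \<Lambda> N"
    using k j' by (auto simp: pidx_def)
  note ends_j' = piece_ends[OF lj] and ends_k = piece_ends[OF k]
  have "gam l (hi l j') \<in> Xp l j'"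
    unfolding ends_j'(4) using ends_j'(2) by simp
  moreover have "gam l v \<in> Xp l k"
    unfolding ends_k(4) using v by simp
  moreover have "1 \<le> j'" "j' < k" "k \<le> N l"
    using j' k by (auto simp: pidx_def)
  moreover have "hi l j' \<in> {0..1}" "v \<in> {0..1}"
    using ends_j' ends_k v by auto
  ultimately show "hi l j' < v"
    using pieces_ordered[OF pidx_fst[OF k]] by simp
qed

lemma earlier_piece_pos_covers:
  assumes w: "word as" and last: "last as = (i, j)" and k: "(lab i j, k) \<in> pidx \<Lambda> N"
    and ne: "bracket (as @ [(lab i j, k)]) \<noteq> {}" and j': "j' \<in> {1..<k}"
  shows "pos_covers XT \<tau> F gam i (bracket as) (lab i j) (Xp (lab i j) j') 1 (sh i j)"
proof -
  let ?l = "lab i j"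
  obtain d t v where d: "lo i j \<le> d" "d \<le> hi i j" "bracket as = gam i ` {lo i j..d}"
    and t: "t \<in> {lo i j..d}"
    and v: "v \<in> {lo ?l k..hi ?l k}" "tsh (- sh i j) (F (gam i t)) = gam ?l v"
    by (rule next_piece_reached[OF w last k ne])
  have ij: "(i, j) \<in> pidx \<Lambda> N"
    using last_word[OF w] last by simp
  have l: "?l \<in> \<Lambda>"
    using piece_image(1)[OF ij] .
  have lj: "(?l, j') \<in> pidx \<Lambda> N" and below: "hi ?l j' < v"
    using earlier_piece_below[OF k j' v(1)] by auto
  have v01: "v \<in> {0..1}"
    using v(1) piece_ends[OF k] by auto
  have start: "tsh (- sh i j) (F (gam i (lo i j))) = gam ?l 0"
    using piece_ends(5)[OF ij] tshift_cancel gam_in_topspace[OF l] by simp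
  show ?thesis
    unfolding pos_covers_def
  proof (intro conjI exI)
    show "0 \<le> lo i j" "lo i j \<le> d" "d \<le> 1" "bracket as = gam i ` {lo i j..d}"
      using piece_ends[OF ij] d by auto
    show "0 \<le> lo ?l j'" "lo ?l j' \<le> hi ?l j'" "hi ?l j' \<le> 1" "Xp ?l j' = gam ?l ` {lo ?l j'..hi ?l j'}"
      using piece_ends[OF lj] by auto
    show "lo i j \<le> lo i j" "lo i j \<le> t" "t \<le> d"
      using t by auto
    show "\<exists>u\<in>{0..1}. rbr gam ?l (tsh (- sh i j) ((F ^^ 1) (gam i (lo i j)))) = gam ?l u \<and> u \<le> lo ?l j'"
      using start piece_ends[OF lj] by (intro bexI[of _ 0]) (auto simp: rbr_def)
    show "\<exists>u\<in>{0..1}. rbr gam ?l (tsh (- sh i j) ((F ^^ 1) (gam i t))) = gam ?l u \<and> hi ?l j' \<le> u"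
      using v(2) v01 below by (intro bexI[of _ v]) (auto simp: rbr_def)
  qed simp
qed

lemma bracket_snoc_earlier_piece:
  assumes w: "word as" and last: "last as = (i, j)" and k: "(lab i j, k) \<in> pidx \<Lambda> N"
    and ne: "bracket (as @ [(lab i j, k)]) \<noteq> {}" and j': "j' \<in> {1..<k}"
  shows "bracket (as @ [(lab i j, j')]) = Xp (lab i j) j'"
proof -
  let ?l = "lab i j"
  have l: "?l \<in> \<Lambda>"
    using pidx_fst[OF k] by simp
  obtain d t v where d: "lo i j \<le> d" "d \<le> hi i j" "bracket as = gam i ` {lo i j..d}"
    and t: "t \<in> {lo i j..d}"
    and v: "v \<in> {lo ?l k..hi ?l k}" "tsh (- sh i j) (F (gam i t)) = gam ?l v"
    by (rule next_piece_reached[OF w last k ne])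
  obtain s where s: "s \<in> {0..1}" "tsh (- sh i j) ` F ` bracket as \<inter> branch ?l = gam ?l ` {0..s}"
    using shifted_image_Int_branch[OF w last d(3,1,2)] by blast
  have v01: "v \<in> {0..1}"
    using v(1) piece_ends[OF k] by auto
  have "gam ?l v \<in> tsh (- sh i j) ` F ` bracket as \<inter> branch ?l"
    using v(2)[symmetric] t d(3) v01 unfolding branch_def by blast
  then obtain v' where v': "v' \<in> {0..s}" "gam ?l v = gam ?l v'"
    using s(2) by auto
  have "v = v'"
    by (rule inj_onD[OF inj_on_gam[OF l] v'(2)]) (use v01 v'(1) s(1) in auto)
  moreover have lj: "(?l, j') \<in> pidx \<Lambda> N" and "hi ?l j' < v"
    using earlier_piece_below[OF k j' v(1)] by auto
  ultimately have "Xp ?l j' \<subseteq> gam ?l ` {0..s}"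
    using piece_ends[OF lj] v'(1) by auto
  then have "Xp ?l j' \<subseteq> tsh (- sh i j) ` F ` bracket as"
    using s(2) by blast
  then show ?thesis
    using bracket_snoc_eq[OF w last lj] by auto
qed

end

theorem mainTheorem13:
  fixes XT :: "'a topology" and h :: "real \<Rightarrow> 'a" and \<tau> F :: "'a \<Rightarrow> 'a"
    and \<Lambda> :: "'i set" and gam :: "'i \<Rightarrow> real \<Rightarrow> 'a"
    and N :: "'i \<Rightarrow> nat" and Xp :: "'i \<Rightarrow> nat \<Rightarrow> 'a set"
    and lab :: "'i \<Rightarrow> nat \<Rightarrow> 'i" and sh :: "'i \<Rightarrow> nat \<Rightarrow> int"
    and \<alpha> \<beta> :: "('i \<times> nat) list set"
  assumes "lifted_graph XT h \<tau>"
    and "continuous_map XT XT F"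
    and "degree_one XT \<tau> F"
    and "sun_like XT h F \<Lambda> gam"
    and "basic_partition XT h \<tau> F \<Lambda> gam N Xp lab sh"
    and "cg_arrow XT h \<tau> F \<Lambda> N Xp \<alpha> \<beta>"
  shows "\<exists>as k. as \<noteq> [] \<and> set as \<subseteq> pidx \<Lambda> N \<and>
           (let i = fst (last as); j = snd (last as); l = lab i j in
              1 \<le> k \<and> k \<le> N l \<and>
              \<alpha> = cls XT h \<tau> F \<Lambda> N Xp as \<and>
              \<beta> = cls XT h \<tau> F \<Lambda> N Xp (as @ [(l, k)]) \<and>
              (\<forall>j' \<in> {1..<k}.
                 pos_covers XT \<tau> F gam i (bra XT h \<tau> F Xp as) l (Xp l j') 1 (sh i j) \<and>
                 cg_arrow XT h \<tau> F \<Lambda> N Xp \<alpha> (cls XT h \<tau> F \<Lambda> N Xp [(l, j')])))"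
proof -
  interpret basic_partition_map XT h \<tau> F \<Lambda> gam N Xp lab sh
    using assms(1-5) by unfold_locales
  obtain as a where \<alpha>: "\<alpha> = vertex_of as" "\<alpha> \<in> cg_vertices XT h \<tau> F \<Lambda> N Xp"
    and \<beta>: "\<beta> = vertex_of (as @ [a])" "\<beta> \<in> cg_vertices XT h \<tau> F \<Lambda> N Xp"
    and w: "word as" and a: "a \<in> pidx \<Lambda> N"
    using assms(6) unfolding cg_arrow_def word_def by blast
  obtain i j where last: "last as = (i, j)"
    by (cases "last as")
  have "bracket (as @ [a]) \<noteq> {}"
    using vertex_bracket_nonempty \<beta> w a by (simp add: word_def)
  then obtain k where k: "a = (lab i j, k)" and ne: "bracket (as @ [(lab i j, k)]) \<noteq> {}"
    using bracket_snoc_mem(1)[OF w last a] by (metis all_not_in_conv prod.collapse)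
  have ka: "(lab i j, k) \<in> pidx \<Lambda> N"
    using a k by simp
  have "pos_covers XT \<tau> F gam i (bracket as) (lab i j) (Xp (lab i j) j') 1 (sh i j) \<and>
        cg_arrow XT h \<tau> F \<Lambda> N Xp \<alpha> (vertex_of [(lab i j, j')])" if j': "j' \<in> {1..<k}" for j'
  proof
    show "pos_covers XT \<tau> F gam i (bracket as) (lab i j) (Xp (lab i j) j') 1 (sh i j)"
      by (rule earlier_piece_pos_covers[OF w last ka ne j'])
    have "(lab i j, j') \<in> pidx \<Lambda> N"
      using ka j' by (auto simp: pidx_def)
    then show "cg_arrow XT h \<tau> F \<Lambda> N Xp \<alpha> (vertex_of [(lab i j, j')])"
      using cg_arrow_to_piece[OF \<alpha>(2)[unfolded \<alpha>(1)] w] bracket_snoc_earlier_piece[OF w last ka ne j'] \<alpha>(1)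
      by simp
  qed
  then show ?thesis
    using w a k \<alpha>(1) \<beta>(1) last by (intro exI[of _ as] exI[of _ k]) (auto simp: word_def pidx_def)
qed

end
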